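(* Let $n_1,n_2$ be positive integers with $n_1\ge n_2$. Let $C_1$ be a collection of $2^{3n_1}$ squares of the form $[i4^{-n_1},(i+1)4^{-n_1}]\times[j4^{-n_1},(j+1)4^{-n_1}]$ ($0\le i,j<4^{n_1}$) such that each column $[j4^{-n_1},(j+1)4^{-n_1}]\times[0,1]$, $j=0,\dots,4^{n_1}-1$, contains exactly $2^{n_1}$ squares of $C_1$. Then one can choose, inside each square of $C_1$, exactly $2^{n_2}$ of its $4^{2n_2}$ grid subsquares of side length $4^{-(n_1+n_2)}$, in such a way that every column $[j4^{-(n_1+n_2)},(j+1)4^{-(n_1+n_2)}]\times[0,1]$, $j=0,\dots,4^{n_1+n_2}-1$, contains at least one chosen subsquare. *)

theory Defs
  imports Main
begin

text \<open>Grid squares of level n are encoded by index pairs (a,b), standing for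
  [a 4^-n,(a+1)4^-n] x [b 4^-n,(b+1)4^-n]; a is the x-index, which determines the column.\<close>

definition subsquares :: "nat \<Rightarrow> nat \<times> nat \<Rightarrow> (nat \<times> nat) set" where
  "subsquares m sq = {(x, y). x div 4 ^ m = fst sq \<and> y div 4 ^ m = snd sq}"

end

theory Submission
  imports Defs
begin

text \<open>Split the bottom row of subsquares of every level-n1 square into 2^n2 runs of 2^n2
  consecutive subsquares. Inside each column of C1, label its 2^n1 \<ge> 2^n2 squares by
  0, ..., 2^n2 - 1 so that every label occurs, and let the square labelled q choose its q-th run.
  A subcolumn of a column lies in the q-th run of that column for exactly one q, so it contains
  the run chosen by the square labelled q.\<close>

lemma ex_column_labelling:
  fixes C :: "('a \<times> 'b) set" and P :: nat
  assumes "0 < P" and "\<And>a. a \<in> A \<Longrightarrow> P \<le> card {b. (a, b) \<in> C}"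
  shows "\<exists>label. (\<forall>sq. label sq < P) \<and> (\<forall>a\<in>A. \<forall>q<P. \<exists>b. (a, b) \<in> C \<and> label (a, b) = q)"
proof -
  have "\<exists>e. a \<in> A \<longrightarrow> e ` {..<P} \<subseteq> {b. (a, b) \<in> C} \<and> inj_on e {..<P}" for a
  proof (cases "a \<in> A")
    case True
    with assms have "finite {b. (a, b) \<in> C}"
      by (metis card.infinite not_le)
    with True assms show ?thesis
      by (metis card_le_inj card_lessThan finite_lessThan)
  qed simp
  then obtain e where e: "\<And>a. a \<in> A \<Longrightarrow> e a ` {..<P} \<subseteq> {b. (a, b) \<in> C} \<and> inj_on (e a) {..<P}"
    by metis
  define label where
    "label sq = (if snd sq \<in> e (fst sq) ` {..<P} then inv_into {..<P} (e (fst sq)) (snd sq) else 0)"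
    for sq
  have "label sq < P" for sq
    using \<open>0 < P\<close> inv_into_into[of "snd sq" "e (fst sq)" "{..<P}"] by (auto simp: label_def)
  moreover have "\<exists>b. (a, b) \<in> C \<and> label (a, b) = q" if "a \<in> A" "q < P" for a q
    using e[OF \<open>a \<in> A\<close>] \<open>q < P\<close> by (intro exI[of _ "e a q"]) (auto simp: label_def)
  ultimately show ?thesis by blast
qed

lemma subsquares_disjoint:
  assumes "p \<in> subsquares m sq" and "p \<in> subsquares m sq'"
  shows "sq = sq'"
  using assms by (auto simp: subsquares_def prod_eq_iff)

lemma UN_Int_subsquares:
  assumes "\<And>s. s \<in> A \<Longrightarrow> T s \<subseteq> subsquares m s" and "sq \<in> A"
  shows "(\<Union>s\<in>A. T s) \<inter> subsquares m sq = T sq"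
  using assms subsquares_disjoint by blast

definition subsquare_run :: "nat \<Rightarrow> nat \<Rightarrow> nat \<times> nat \<Rightarrow> (nat \<times> nat) set" where
  "subsquare_run m k sq = (\<lambda>t. (fst sq * 4 ^ m + k * 2 ^ m + t, snd sq * 4 ^ m)) ` {..<2 ^ m}"

lemma four_power_eq_square: "(4::nat) ^ m = 2 ^ m * 2 ^ m"
  by (simp flip: power_mult_distrib)

lemma mult_add_less_square:
  fixes k t N :: nat
  assumes "k < N" and "t < N"
  shows "k * N + t < N * N"
proof -
  have "k * N + t < (k + 1) * N" using \<open>t < N\<close> by simp
  also have "\<dots> \<le> N * N" using \<open>k < N\<close> by (intro mult_right_mono) auto
  finally show ?thesis .
qed

lemma subsquare_run_subset:
  assumes "k < 2 ^ m"
  shows "subsquare_run m k sq \<subseteq> subsquares m sq"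
  using mult_add_less_square[OF assms]
  by (auto simp: subsquare_run_def subsquares_def four_power_eq_square add.assoc)

lemma card_subsquare_run: "card (subsquare_run m k sq) = 2 ^ m"
  by (simp add: subsquare_run_def card_image inj_on_def)

lemma subcolumn_index_less: "(c mod 4 ^ m) div 2 ^ m < (2::nat) ^ m"
  by (simp add: four_power_eq_square less_mult_imp_div_less)

lemma mem_subsquare_run_column:
  "(c, b * 4 ^ m) \<in> subsquare_run m ((c mod 4 ^ m) div 2 ^ m) (c div 4 ^ m, b)"
proof -
  have "c = c div 4 ^ m * 4 ^ m + (c mod 4 ^ m) div 2 ^ m * 2 ^ m + (c mod 4 ^ m) mod 2 ^ m"
    using div_mult_mod_eq[of "c mod 4 ^ m" "2 ^ m"] div_mult_mod_eq[of c "4 ^ m"] by linarith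
  then show ?thesis
    unfolding subsquare_run_def by (intro image_eqI[of _ _ "(c mod 4 ^ m) mod 2 ^ m"]) auto
qed

theorem lemma3p1:
  fixes n1 n2 :: nat and C1 :: "(nat \<times> nat) set"
  assumes "n1 \<ge> 1" and "n2 \<ge> 1" and "n1 \<ge> n2"
    and "C1 \<subseteq> {..<4 ^ n1} \<times> {..<4 ^ n1}"
    and "card C1 = 2 ^ (3 * n1)"
    and "\<forall>a < 4 ^ n1. card {b. (a, b) \<in> C1} = 2 ^ n1"
  shows "\<exists>S :: (nat \<times> nat) set.
           S \<subseteq> (\<Union>sq\<in>C1. subsquares n2 sq)
         \<and> (\<forall>sq\<in>C1. card (S \<inter> subsquares n2 sq) = 2 ^ n2)
         \<and> (\<forall>c < 4 ^ (n1 + n2). \<exists>y. (c, y) \<in> S)"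
proof -
  have "(2::nat) ^ n2 \<le> card {b. (a, b) \<in> C1}" if "a \<in> {..<4 ^ n1}" for a
    using that assms(3,6) by (simp add: power_increasing)
  then obtain label where label_less: "\<And>sq. label sq < (2::nat) ^ n2"
    and label_onto: "\<And>a q. a < 4 ^ n1 \<Longrightarrow> q < 2 ^ n2 \<Longrightarrow> \<exists>b. (a, b) \<in> C1 \<and> label (a, b) = q"
    using ex_column_labelling[of "2 ^ n2" "{..<4 ^ n1}" C1]
    by (metis lessThan_iff zero_less_numeral zero_less_power)
  define S where "S = (\<Union>sq\<in>C1. subsquare_run n2 (label sq) sq)"
  have run_subset: "subsquare_run n2 (label sq) sq \<subseteq> subsquares n2 sq" for sq
    using subsquare_run_subset[OF label_less] .
  have "card (S \<inter> subsquares n2 sq) = 2 ^ n2" if "sq \<in> C1" for sq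
    unfolding S_def UN_Int_subsquares[OF run_subset that] by (rule card_subsquare_run)
  moreover have "\<exists>y. (c, y) \<in> S" if "c < 4 ^ (n1 + n2)" for c
  proof -
    have "c div 4 ^ n2 < 4 ^ n1"
      using that by (simp add: power_add less_mult_imp_div_less)
    with label_onto subcolumn_index_less obtain b where "(c div 4 ^ n2, b) \<in> C1"
      and "label (c div 4 ^ n2, b) = (c mod 4 ^ n2) div 2 ^ n2"
      by blast
    then show ?thesis
      using mem_subsquare_run_column[where c = c and m = n2 and b = b] unfolding S_def by force
  qed
  moreover have "S \<subseteq> (\<Union>sq\<in>C1. subsquares n2 sq)"
    unfolding S_def using run_subset by blast
  ultimately show ?thesis by blast
qed

end
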